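(* Let $q\in\mathbb C_p$ with $|1-q|_p<p^{-1/(p-1)}$ ($p$ an odd prime). For $m\in\mathbb Z_+$ and $r\in\mathbb N$ with $m\le r$, $$\binom rm_q q^{\binom m2-rm}=\frac{1}{[m]_q!}\sum_{k=0}^mq^{-rm}S_1(m-1,k;q)(-1)^k[r]_q^{m-k}.$$
   Context: $[x]_q=\frac{1-q^x}{1-q}$; $[m]_q!=[m]_q\cdots[1]_q$, $[0]_q!=1$; $\binom rm_q=\frac{[r]_q!}{[m]_q![r-m]_q!}$. The $q$-Stirling numbers of the first kind are defined by $\prod_{k=1}^N(1+[k]_qz)=\sum_{k\ge0}S_1(N,k;q)z^k$ for $N\ge-1$ (empty product $=1$; $S_1(N,k;q)=0$ for $k>N$; in particular $S_1(-1,0;q)=1$). *)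

theory Defs
  imports "HOL-Computational_Algebra.Polynomial"
begin

definition qint :: "'a::field \<Rightarrow> nat \<Rightarrow> 'a" where
  "qint q x = (if q = 1 then of_nat x else (1 - q ^ x) / (1 - q))"

definition qfact :: "'a::field \<Rightarrow> nat \<Rightarrow> 'a" where
  "qfact q m = (\<Prod>k\<in>{1..m}. qint q k)"

definition qbinom :: "'a::field \<Rightarrow> nat \<Rightarrow> nat \<Rightarrow> 'a" where
  "qbinom q r m = qfact q r / (qfact q m * qfact q (r - m))"

definition qstirling1 :: "'a::field \<Rightarrow> nat \<Rightarrow> nat \<Rightarrow> 'a" where
  "qstirling1 q N k = coeff (\<Prod>i\<in>{1..N}. [:1, qint q i:]) k"

end

theory Submission
  imports Defs
begin

text \<open>
  The polynomial \<open>\<Prod>i<m. (1 + [i]\<^sub>q z)\<close> has the q-Stirling numbers \<open>S\<^sub>1(m-1,k;q)\<close> as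
  coefficients (the factor \<open>i = 0\<close> is \<open>1\<close>), and the alternating sum in the theorem is
  its reversal evaluated at \<open>x = [r]\<^sub>q\<close>, i.e. \<open>\<Prod>i<m. ([r]\<^sub>q - [i]\<^sub>q)\<close>. Since
  \<open>[r]\<^sub>q - [i]\<^sub>q = q\<^sup>i [r-i]\<^sub>q\<close>, this product is \<open>q\<^bsup>m choose 2\<^esup> [r]\<^sub>q!/[r-m]\<^sub>q!\<close>, and dividing
  by \<open>[m]\<^sub>q!\<close> gives the q-binomial coefficient.
\<close>

lemma reversed_sum_coeff_mult_linear:
  fixes p :: "'a::field poly"
  assumes "degree p \<le> n"
  shows "(\<Sum>k\<le>Suc n. coeff (p * [:1, a:]) k * (-1)^k * x^(Suc n - k))
       = (x - a) * (\<Sum>k\<le>n. coeff p k * (-1)^k * x^(n - k))"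
proof -
  have split: "p * [:1, a:] = p + pCons 0 (smult a p)"
    by (simp add: mult_pCons_right)
  have "coeff p (Suc n) = 0"
    using assms by (simp add: coeff_eq_0)
  then have from_p: "(\<Sum>k\<le>Suc n. coeff p k * (-1)^k * x^(Suc n - k))
      = x * (\<Sum>k\<le>n. coeff p k * (-1)^k * x^(n - k))"
    by (simp add: sum_distrib_left Suc_diff_le algebra_simps)
  have from_shift: "(\<Sum>k\<le>Suc n. coeff (pCons 0 (smult a p)) k * (-1)^k * x^(Suc n - k))
      = - a * (\<Sum>k\<le>n. coeff p k * (-1)^k * x^(n - k))"
    by (subst sum.atMost_Suc_shift) (simp add: sum_distrib_left algebra_simps)
  show ?thesis
    unfolding split coeff_add distrib_right sum.distrib from_p from_shift
    by (simp add: algebra_simps)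
qed

lemma reversed_sum_coeff_prod_linear:
  fixes a :: "'b \<Rightarrow> 'a::field"
  assumes "finite A"
  shows "(\<Sum>k\<le>card A. coeff (\<Prod>i\<in>A. [:1, a i:]) k * (-1)^k * x^(card A - k))
       = (\<Prod>i\<in>A. x - a i)"
  using assms
proof (induction A rule: finite_induct)
  case empty
  then show ?case by simp
next
  case (insert j A)
  have "degree (\<Prod>i\<in>A. [:1, a i:]) \<le> (\<Sum>i\<in>A. degree [:1, a i:])"
    using degree_prod_sum_le[OF insert.hyps(1)] unfolding comp_def .
  also have "\<dots> \<le> card A"
    using sum_mono[of A "\<lambda>i. degree [:1, a i:]" "\<lambda>_. 1"] by simp
  finally have "degree (\<Prod>i\<in>A. [:1, a i:]) \<le> card A" .
  from reversed_sum_coeff_mult_linear[OF this, of "a j" x]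
  show ?case
    using insert by (simp add: mult.commute)
qed

lemma qint_0 [simp]: "qint q 0 = 0"
  by (simp add: qint_def)

lemma qstirling1_eq_coeff_prod:
  "qstirling1 q (m - 1) k = coeff (\<Prod>i<m. [:1, qint q i:]) k"
proof (cases m)
  case (Suc n)
  have "{..<m} = insert 0 {1..n}"
    using Suc by auto
  then have prod_eq: "(\<Prod>i<m. [:1, qint q i:]) = (\<Prod>i\<in>{1..n}. [:1, qint q i:])"
    by simp
  show ?thesis
    unfolding qstirling1_def prod_eq using Suc by simp
qed (simp add: qstirling1_def)

lemma reversed_sum_qstirling1:
  "(\<Sum>k=0..m. qstirling1 q (m - 1) k * (-1)^k * x^(m - k)) = (\<Prod>i<m. x - qint q i)"
  unfolding qstirling1_eq_coeff_prod atLeast0AtMost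
  using reversed_sum_coeff_prod_linear[of "{..<m}" "qint q" x] by simp

lemma qint_diff:
  fixes q :: "'a::field"
  assumes "i \<le> r"
  shows "qint q r - qint q i = q^i * qint q (r - i)"
proof (cases "q = 1")
  case True
  then show ?thesis using assms by (simp add: qint_def of_nat_diff)
next
  case False
  have "q^r = q^i * q^(r - i)"
    using assms by (simp flip: power_add)
  then have "(1 - q^r) - (1 - q^i) = q^i * (1 - q^(r - i))"
    by (simp add: algebra_simps)
  moreover have "qint q r - qint q i = ((1 - q^r) - (1 - q^i)) / (1 - q)"
    using False by (simp add: qint_def diff_divide_distrib)
  ultimately show ?thesis
    using False by (simp add: qint_def)
qed

lemma prod_qint_diff:
  fixes q :: "'a::field"
  assumes "m \<le> r"
  shows "(\<Prod>i<m. qint q r - qint q i) = q^(m choose 2) * (\<Prod>i<m. qint q (r - i))"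
  using assms
proof (induction m)
  case 0
  then show ?case by (simp add: numeral_2_eq_2)
next
  case (Suc m)
  have "Suc m choose 2 = m + (m choose 2)"
    by (simp add: numeral_2_eq_2)
  then show ?case
    using Suc qint_diff[of m r q] by (simp add: power_add algebra_simps)
qed

lemma qfact_eq_prod_times_qfact:
  assumes "m \<le> r"
  shows "qfact q r = (\<Prod>i<m. qint q (r - i)) * qfact q (r - m)"
  using assms
proof (induction m)
  case 0
  then show ?case by simp
next
  case (Suc m)
  then have "r - m = Suc (r - Suc m)" by simp
  then have "qfact q (r - m) = qint q (r - m) * qfact q (r - Suc m)"
    by (simp add: qfact_def prod.cl_ivl_Suc mult.commute)
  with Suc show ?case by (simp add: algebra_simps)
qed

lemma qfact_nonzero:
  fixes q :: "'a::field_char_0"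
  assumes "\<forall>k::nat. 0 < k \<longrightarrow> q ^ k = 1 \<longrightarrow> q = 1"
  shows "qfact q n \<noteq> 0"
  using assms by (auto simp: qfact_def qint_def)

lemma choose_two_less_mult:
  assumes "1 \<le> m" and "m \<le> r"
  shows "m choose 2 < r * m"
proof -
  have "m choose 2 \<le> m * (m - 1)" by (simp add: choose_two)
  also have "\<dots> < m * m" using assms(1) by simp
  also have "\<dots> \<le> r * m" using assms(2) by simp
  finally show ?thesis .
qed

theorem mainTheorem13:
  fixes q :: "'a::field_char_0" and m r :: nat
  assumes q_not_root_of_unity: "\<forall>k::nat. 0 < k \<longrightarrow> q ^ k = 1 \<longrightarrow> q = 1"
    and "1 \<le> m" and "m \<le> r"
  shows "qbinom q r m * q powi (int (m choose 2) - int r * int m) =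
    (1 / qfact q m) * (\<Sum>k=0..m. q powi (- (int r * int m)) * qstirling1 q (m - 1) k
        * (-1) ^ k * qint q r ^ (m - k))"
proof (cases "q = 0")
  case True
  \<comment> \<open>Both sides vanish: both exponents are negative and \<open>0 powi k = 0\<close> for \<open>k \<noteq> 0\<close>.\<close>
  have "int (m choose 2) < int r * int m"
    using choose_two_less_mult[OF assms(2,3)] by (simp flip: of_nat_mult)
  then show ?thesis
    using True assms(2,3) by (simp add: power_int_0_left_if)
next
  case False
  define falling where "falling = (\<Prod>i<m. qint q (r - i))"
  define scale where "scale = q powi (- (int r * int m))"
  have "(\<Sum>k=0..m. scale * qstirling1 q (m - 1) k * (-1)^k * qint q r^(m - k))
      = scale * (\<Sum>k=0..m. qstirling1 q (m - 1) k * (-1)^k * qint q r^(m - k))"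
    by (simp add: sum_distrib_left mult.assoc)
  also have "\<dots> = scale * (q^(m choose 2) * falling)"
    unfolding reversed_sum_qstirling1 prod_qint_diff[OF assms(3)] falling_def ..
  finally have sum_eq: "(\<Sum>k=0..m. scale * qstirling1 q (m - 1) k * (-1)^k * qint q r^(m - k))
      = scale * (q^(m choose 2) * falling)" .
  have qfact_eq: "qfact q r = falling * qfact q (r - m)"
    unfolding falling_def by (rule qfact_eq_prod_times_qfact[OF assms(3)])
  have power_eq: "q powi (int (m choose 2) - int r * int m) = q^(m choose 2) * scale"
    using False by (simp add: scale_def power_int_diff power_int_minus field_simps)
  have "qfact q m \<noteq> 0" "qfact q (r - m) \<noteq> 0"
    using qfact_nonzero[OF q_not_root_of_unity] by auto
  then show ?thesis
    unfolding sum_eq[unfolded scale_def] power_eq[unfolded scale_def] qbinom_def qfact_eq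
    by (simp add: field_simps)
qed

end
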